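(* Let $p$ and $q$ be distinct primes and let $a,b$ be positive integers. Then \[ B(p^{a}q^{b}) \;\ge\; \min\{p^{a},\,q^{b}\}. \]
   Context: The height $H(f)$ of a polynomial $f\in\mathbb{Z}[x]$ is the maximum of the absolute values of its coefficients. For a positive integer $n$, $B(n)=\max\{H(f): f\in\mathbb{Z}[x],\ f \text{ divides } x^n-1 \text{ in } \mathbb{Z}[x]\}$. *)

theory Defs
  imports "HOL-Computational_Algebra.Polynomial"
begin

definition height :: "int poly \<Rightarrow> int" where
  "height f = Max {\<bar>coeff f i\<bar> | i. i \<le> degree f}"

definition B :: "nat \<Rightarrow> int" where
  "B n = Max {height f | f. f dvd (monom 1 n - 1 :: int poly)}"

end

theory Submission
  imports Defs "Berlekamp_Zassenhaus.Factor_Bound" "HOL-Number_Theory.Cong"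
begin

(* Write P = p^a and Q = q^b; they are coprime.  Let
     G k = 1 + x + ... + x^(k-1),  so that  x^k - 1 = (x - 1) * G k.
   Since x^(PQ) - 1 = (x - 1) * G Q * (sum over i<P of x^(Qi)), and the exponents Qi
   run through all residues modulo P, the cofactor sum is congruent to G P modulo
   x^P - 1, hence divisible by G P.  So  G P * G Q  divides  x^(PQ) - 1.
   The coefficient of x^m in G P * G Q is m + 1 for m < min P Q, so its height is at
   least min P Q.  Finally, B(n) is a maximum over a finite set (Mignotte's bound
   bounds the height of every divisor of the nonzero polynomial x^n - 1), so B(PQ) is
   at least the height of any particular divisor. *)

hide_const (open) UnivPoly.coeff UnivPoly.monom Mahler_Measure.height
  Unique_Factorization.comm_monoid_mult_class.coprime

definition geom_poly :: "nat \<Rightarrow> 'a::comm_ring_1 poly" where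
  "geom_poly k = (\<Sum>i<k. [:0,1:] ^ i)"

lemma coeff_geom_poly: "coeff (geom_poly k) j = (if j < k then 1 else 0)"
  by (simp add: geom_poly_def coeff_sum monom_altdef[of 1, simplified, symmetric] coeff_monom)

lemma geom_poly_factor: "[:0,1:] ^ k - 1 = ([:0,1:] - 1) * geom_poly k"
  unfolding geom_poly_def by (rule power_diff_1_eq)

lemma geom_poly_dvd_pow_minus_one: "geom_poly k dvd [:0,1:] ^ k - 1"
  using geom_poly_factor by (metis dvd_triv_right)

text \<open>Modulo \<open>geom_poly P\<close> (a divisor of \<open>x^P - 1\<close>), exponents of \<open>x\<close> may be reduced mod \<open>P\<close>.\<close>
lemma geom_poly_dvd_pow_diff_mod:
  "geom_poly P dvd ([:0,1:] :: 'a::comm_ring_1 poly) ^ k - [:0,1:] ^ (k mod P)"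
proof -
  let ?x = "[:0,1:] :: 'a poly"
  have split: "?x ^ k - ?x ^ (k mod P) = ?x ^ (k mod P) * ((?x ^ P) ^ (k div P) - 1)"
    by (simp add: algebra_simps flip: power_mult power_add)
  have "?x ^ P - 1 dvd (?x ^ P) ^ (k div P) - 1"
    using power_diff_1_eq[of "?x ^ P" "k div P"] by (metis dvd_triv_left)
  hence "geom_poly P dvd (?x ^ P) ^ (k div P) - 1"
    using geom_poly_dvd_pow_minus_one dvd_trans by blast
  thus ?thesis unfolding split by simp
qed

lemma bij_betw_mult_mod:
  fixes P Q :: nat
  assumes "coprime Q P"
  shows "bij_betw (\<lambda>i. (i * Q) mod P) {..<P} {..<P}"
proof -
  have inj: "inj_on (\<lambda>i. (i * Q) mod P) {..<P}"
  proof (rule inj_onI)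
    fix i j assume i: "i \<in> {..<P}" and j: "j \<in> {..<P}"
      and "(i * Q) mod P = (j * Q) mod P"
    hence "[i * Q = j * Q] (mod P)" by (simp add: cong_def)
    hence "[i = j] (mod P)" using cong_mult_rcancel_nat[OF assms] by simp
    thus "i = j" using i j by (simp add: cong_def)
  qed
  moreover have "(\<lambda>i. (i * Q) mod P) ` {..<P} \<subseteq> {..<P}"
    by (cases "P = 0") auto
  ultimately have "(\<lambda>i. (i * Q) mod P) ` {..<P} = {..<P}"
    using card_image[OF inj] by (intro card_subset_eq) auto
  thus ?thesis using inj by (simp add: bij_betw_def)
qed

lemma geom_poly_dvd_sum_pow:
  fixes P Q :: nat
  assumes "coprime Q P"
  shows "geom_poly P dvd (\<Sum>i<P. (([:0,1:] :: 'a::comm_ring_1 poly) ^ Q) ^ i)"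
proof -
  let ?x = "[:0,1:] :: 'a poly"
  have reduced: "(\<Sum>i<P. ?x ^ ((i * Q) mod P)) = geom_poly P"
    using sum.reindex_bij_betw[OF bij_betw_mult_mod[OF assms], of "\<lambda>j. ?x ^ j"]
    by (simp add: geom_poly_def)
  have "geom_poly P dvd (\<Sum>i<P. ?x ^ (i * Q) - ?x ^ ((i * Q) mod P))"
    by (intro dvd_sum geom_poly_dvd_pow_diff_mod)
  hence "geom_poly P dvd (\<Sum>i<P. ?x ^ (i * Q)) - geom_poly P"
    by (simp only: sum_subtractf reduced)
  hence "geom_poly P dvd (\<Sum>i<P. ?x ^ (i * Q))"
    by (metis diff_add_cancel dvd_add dvd_refl)
  thus ?thesis by (simp add: power_mult[symmetric] mult.commute)
qed

lemma geom_poly_mult_dvd: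
  fixes P Q :: nat
  assumes "coprime Q P"
  shows "geom_poly P * geom_poly Q dvd (monom 1 (P * Q) - 1 :: 'a::comm_ring_1 poly)"
proof -
  let ?x = "[:0,1:] :: 'a poly"
  let ?S = "\<Sum>i<P. (?x ^ Q) ^ i"
  have "monom 1 (P * Q) - 1 = (?x ^ Q) ^ P - 1"
    by (simp add: monom_altdef mult.commute[of P Q] power_mult)
  also have "\<dots> = (?x ^ Q - 1) * ?S" by (rule power_diff_1_eq)
  also have "\<dots> = (?x - 1) * (geom_poly Q * ?S)"
    by (subst geom_poly_factor) (simp add: mult.assoc)
  finally have factored: "monom 1 (P * Q) - 1 = (?x - 1) * (geom_poly Q * ?S)" .
  have "geom_poly P * geom_poly Q dvd geom_poly Q * ?S"
    using mult_dvd_mono[OF geom_poly_dvd_sum_pow[OF assms] dvd_refl[of "geom_poly Q"]]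
    by (simp add: mult.commute)
  thus ?thesis unfolding factored by (rule dvd_mult)
qed

lemma coeff_geom_poly_mult:
  assumes "m < P" "m < Q"
  shows "coeff (geom_poly P * geom_poly Q :: 'a::comm_ring_1 poly) m = of_nat (m + 1)"
proof -
  have "coeff (geom_poly P * geom_poly Q :: 'a poly) m
        = (\<Sum>i\<le>m. coeff (geom_poly P) i * coeff (geom_poly Q) (m - i))"
    by (rule coeff_mult)
  also have "\<dots> = (\<Sum>i\<le>m. 1)"
    using assms by (intro sum.cong) (auto simp: coeff_geom_poly)
  finally show ?thesis by simp
qed

lemma height_eq_Max_image: "height g = Max ((\<lambda>i. \<bar>coeff g i\<bar>) ` {..degree g})"
  unfolding height_def by (rule arg_cong[where f = Max]) auto

lemma abs_coeff_le_height: "\<bar>coeff g i\<bar> \<le> height g"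
proof (cases "i \<le> degree g")
  case True
  thus ?thesis unfolding height_eq_Max_image by (intro Max_ge) auto
next
  case False
  hence "coeff g i = 0" by (simp add: coeff_eq_0)
  moreover have "\<bar>coeff g 0\<bar> \<le> height g"
    unfolding height_eq_Max_image by (intro Max_ge) auto
  ultimately show ?thesis by simp
qed

lemma height_le: "(\<And>i. \<bar>coeff g i\<bar> \<le> M) \<Longrightarrow> height g \<le> M"
  unfolding height_eq_Max_image by (rule Max.boundedI) auto

text \<open>The heights of the divisors of a nonzero integer polynomial are bounded (Mignotte),
  so \<open>B n\<close> is a genuine maximum and dominates the height of every divisor of \<open>x^n - 1\<close>.\<close>
lemma height_dvd_le_B:
  assumes "n > 0" and "f dvd (monom 1 n - 1 :: int poly)"
  shows "height f \<le> B n"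
proof -
  define F :: "int poly" where "F = monom 1 n - 1"
  have "coeff F n = 1" using assms(1) by (simp add: F_def)
  hence F_nonzero: "F \<noteq> 0" by auto
  have "{height g | g. g dvd F} \<subseteq> {0..mignotte_bound F (degree F)}"
  proof
    fix h assume "h \<in> {height g | g. g dvd F}"
    then obtain g where g: "g dvd F" "h = height g" by auto
    have "degree g \<le> degree F" using dvd_imp_degree_le[OF g(1) F_nonzero] .
    hence "height g \<le> mignotte_bound F (degree F)"
      by (intro height_le mignotte_bound[OF F_nonzero g(1)])
    moreover have "0 \<le> height g" using abs_coeff_le_height[of g 0] by simp
    ultimately show "h \<in> {0..mignotte_bound F (degree F)}" using g by auto
  qed
  hence "finite {height g | g. g dvd F}" by (rule finite_subset) simp
  thus ?thesis unfolding B_def F_def[symmetric]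
    by (rule Max_ge) (use assms in \<open>auto simp: F_def\<close>)
qed

theorem mainTheorem2:
  fixes p q a b :: nat
  assumes "prime p" and "prime q" and "p \<noteq> q" and "a > 0" and "b > 0"
  shows "B (p ^ a * q ^ b) \<ge> int (min (p ^ a) (q ^ b))"
proof -
  define P Q where "P = p ^ a" and "Q = q ^ b"
  define f :: "int poly" where "f = geom_poly P * geom_poly Q"
  have coprime: "coprime Q P" unfolding P_def Q_def using assms
    by (simp add: primes_coprime coprime_power_left_iff coprime_power_right_iff)
  have pos: "P > 0" "Q > 0" unfolding P_def Q_def using assms by (auto simp: prime_gt_0_nat)
  have "coeff f (min P Q - 1) = int (min P Q - 1 + 1)"
    using pos unfolding f_def by (intro coeff_geom_poly_mult) auto
  hence "coeff f (min P Q - 1) = int (min P Q)"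
    using pos by simp
  hence "int (min P Q) \<le> height f"
    using abs_coeff_le_height[of f "min P Q - 1"] by simp
  also have "\<dots> \<le> B (P * Q)"
    using pos geom_poly_mult_dvd[OF coprime] by (intro height_dvd_le_B) (auto simp: f_def)
  finally show ?thesis unfolding P_def Q_def .
qed

end
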